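(* The binary predicate $\mathrm{Sl}$ on $\mathsf{W}^N_3$ is first-order definable in the structure $(\mathsf{W}^N_3,\prec,\Diamond_1,\Diamond_3)$.
   Context: Words are finite strings over $\mathbb{N}$; $\mathsf{W}_\omega$ is the set of all words, $\Lambda$ the empty word, $AB$ concatenation. For $k\in\mathbb{N}$, $\mathsf{S}_k$ is the set of words all of whose symbols are $\ge k$; $\mathsf{W}_3$ is the set of words all of whose symbols are $\le3$. Given a linear preorder $\precsim$ with $A\sim B$ iff $A\precsim B\wedge B\precsim A$ and $A\prec B$ iff $A\precsim B\wedge\neg B\precsim A$, a finite sequence $(A_1,\dots,A_p)$ is lexicographically not greater than $(B_1,\dots,B_q)$ iff either $p\le q$ and $A_i\sim B_i$ for all $i\le p$, or there is $s<\min(p,q)$ with $A_i\sim B_i$ for $i\le s$ and $A_{s+1}\prec B_{s+1}$. A lexicographically maximal subsequence of a finite sequence is a subsequence that is lexicographically not less than every subsequence. The linear preorder $\precsim$ on $\mathsf{W}_\omega$ is defined by recursion on (largest symbol of $AB$) $-$ (smallest symbol of $AB$): $\Lambda\precsim\Lambda$; if $AB$ is nonempty with minimal symbol $n$, write uniquely $A=A_1n\cdots nA_k$, $B=B_1n\cdots nB_l$ ($k,l\ge1$) with $A_i,B_j\in\mathsf{S}_{n+1}$ (possibly empty); let $C,D$ be lexicographically maximal subsequences of $(A_1,\dots,A_k)$, $(B_1,\dots,B_l)$; then $A\precsim B$ iff $C$ is lexicographically not greater than $D$. The set $\mathsf{NF}$: $\Lambda\in\mathsf{NF}$; a word with minimal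 symbol $n$, written $A_1n\cdots nA_k$ with $k\ge2$, $A_i\in\mathsf{S}_{n+1}$, is in $\mathsf{NF}$ iff $A_k\precsim\dots\precsim A_1$ and all $A_i\in\mathsf{NF}$. Every word is equivalent to exactly one word of $\mathsf{NF}$. For $A\in\mathsf{NF}$, $\Diamond_nA$ is the unique word of $\mathsf{NF}$ equivalent to $An$. $\mathsf{W}^N_3=\mathsf{W}_3\cap\mathsf{NF}$. For $A,B\in\mathsf{W}^N_3$, $\mathrm{Sl}(A,B)$ ("$B$ is a slice of $A$") holds iff $A\neq\Lambda$, $B\neq\Lambda$, and there are $n\ge m\ge1$ and $C_1,\dots,C_n\in\mathsf{S}_1$ with $A=C_10C_20\cdots0C_n$ and $B=C_10C_20\cdots0C_m$. *)

theory Defs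
  imports Main
begin

type_synonym word = "nat list"

definition S :: "nat \<Rightarrow> word set" where
  "S k = {A. \<forall>x\<in>set A. k \<le> x}"

definition W3 :: "word set" where
  "W3 = {A. \<forall>x\<in>set A. x \<le> 3}"

fun splitw :: "nat \<Rightarrow> word \<Rightarrow> word list" where
  "splitw n [] = [[]]"
| "splitw n (x # xs) =
     (if x = n then [] # splitw n xs
      else (let r = splitw n xs in (x # hd r) # tl r))"

fun joinw :: "nat \<Rightarrow> word list \<Rightarrow> word" where
  "joinw n [] = []"
| "joinw n [A] = A"
| "joinw n (A # As) = A @ n # joinw n As"

definition lexle :: "('a \<Rightarrow> 'a \<Rightarrow> bool) \<Rightarrow> 'a list \<Rightarrow> 'a list \<Rightarrow> bool" where
  "lexle R As Bs \<longleftrightarrow>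
     (length As \<le> length Bs \<and>
        (\<forall>i<length As. R (As ! i) (Bs ! i) \<and> R (Bs ! i) (As ! i)))
   \<or> (\<exists>s<min (length As) (length Bs).
        (\<forall>i<s. R (As ! i) (Bs ! i) \<and> R (Bs ! i) (As ! i))
        \<and> R (As ! s) (Bs ! s) \<and> \<not> R (Bs ! s) (As ! s))"

definition lexmax :: "('a \<Rightarrow> 'a \<Rightarrow> bool) \<Rightarrow> 'a list \<Rightarrow> 'a list \<Rightarrow> bool" where
  "lexmax R As Cs \<longleftrightarrow> Cs \<in> set (subseqs As) \<and> (\<forall>Es\<in>set (subseqs As). lexle R Es Cs)"

text \<open>The recursion in the paper is on (max symbol - min symbol) of AB; every recursive
  call is on words whose concatenation is strictly shorter than AB, so we implement it by
  primitive recursion on a fuel parameter that exceeds length (A @ B).\<close>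
primrec le_aux :: "nat \<Rightarrow> word \<Rightarrow> word \<Rightarrow> bool" where
  "le_aux 0 A B = True"
| "le_aux (Suc d) A B =
     (if A @ B = [] then True
      else (let n = Min (set (A @ B));
                C = (SOME C. lexmax (le_aux d) (splitw n A) C);
                D = (SOME D. lexmax (le_aux d) (splitw n B) D)
            in lexle (le_aux d) C D))"

definition wle :: "word \<Rightarrow> word \<Rightarrow> bool" (infix "\<precsim>" 50) where
  "A \<precsim> B \<longleftrightarrow> le_aux (Suc (length (A @ B))) A B"

definition wequiv :: "word \<Rightarrow> word \<Rightarrow> bool" where
  "wequiv A B \<longleftrightarrow> A \<precsim> B \<and> B \<precsim> A"

definition wless :: "word \<Rightarrow> word \<Rightarrow> bool" (infix "\<prec>" 50) where
  "A \<prec> B \<longleftrightarrow> A \<precsim> B \<and> \<not> B \<precsim> A"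

inductive NF :: "word \<Rightarrow> bool" where
  NF_empty: "NF []"
| NF_join: "\<lbrakk> 2 \<le> length As; \<forall>a\<in>set As. a \<in> S (Suc n) \<and> NF a;
             \<forall>i. Suc i < length As \<longrightarrow> (As ! Suc i) \<precsim> (As ! i) \<rbrakk>
            \<Longrightarrow> NF (joinw n As)"

definition Diamond :: "nat \<Rightarrow> word \<Rightarrow> word" where
  "Diamond n A = (THE B. NF B \<and> wequiv B (A @ [n]))"

definition W3N :: "word set" where
  "W3N = W3 \<inter> {A. NF A}"

definition Sl :: "word \<Rightarrow> word \<Rightarrow> bool" where
  "Sl A B \<longleftrightarrow> A \<in> W3N \<and> B \<in> W3N \<and> A \<noteq> [] \<and> B \<noteq> [] \<and>
     (\<exists>n m Cs. 1 \<le> m \<and> m \<le> n \<and> length Cs = n \<and> (\<forall>C\<in>set Cs. C \<in> S 1) \<and>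
        A = joinw 0 Cs \<and> B = joinw 0 (take m Cs))"

datatype fterm = FVar nat | FD1 fterm | FD3 fterm

datatype fform =
    FLess fterm fterm
  | FEq fterm fterm
  | FNot fform
  | FAnd fform fform
  | FEx nat fform

fun tval :: "(nat \<Rightarrow> word) \<Rightarrow> fterm \<Rightarrow> word" where
  "tval e (FVar x) = e x"
| "tval e (FD1 t) = Diamond 1 (tval e t)"
| "tval e (FD3 t) = Diamond 3 (tval e t)"

fun fsat :: "(nat \<Rightarrow> word) \<Rightarrow> fform \<Rightarrow> bool" where
  "fsat e (FLess s t) = (tval e s \<prec> tval e t)"
| "fsat e (FEq s t) = (tval e s = tval e t)"
| "fsat e (FNot \<phi>) = (\<not> fsat e \<phi>)"
| "fsat e (FAnd \<phi> \<psi>) = (fsat e \<phi> \<and> fsat e \<psi>)"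
| "fsat e (FEx x \<phi>) = (\<exists>a\<in>W3N. fsat (e(x := a)) \<phi>)"

end

theory Submission
  imports Defs "HOL-Library.Sublist"
begin

text \<open>Split words at the symbol 0 into pieces. For normal forms, B is a slice of A exactly
  when the pieces of B form a prefix of the pieces of A, while B \<precsim> A compares the two lists
  of pieces lexicographically. Appending 1 to B replaces its last piece by the immediate
  successor of that piece, so the pieces of B form a prefix of those of A iff
  B \<precsim> A \<prec> B @ [1], and B @ [1] is equivalent to \<Diamond>1 B. Since B \<noteq> [] iff B has a
  strict predecessor, Sl A B is expressed by (\<exists>z. z \<prec> B) \<and> \<not> A \<prec> B \<and> A \<prec> \<Diamond>1 B.\<close>

lemma lexle_Nil [simp]: "lexle R [] ys"
  by (simp add: lexle_def)

lemma lexle_Cons_Nil [simp]: "\<not> lexle R (x # xs) []"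
  by (simp add: lexle_def)

lemma lexle_Cons_Cons [simp]:
  "lexle R (x # xs) (y # ys) \<longleftrightarrow> R x y \<and> (R y x \<longrightarrow> lexle R xs ys)"
  unfolding lexle_def by (auto simp: All_less_Suc2 Ex_less_Suc2)

lemma lexle_refl: "\<forall>x\<in>set xs. R x x \<Longrightarrow> lexle R xs xs"
  by (induction xs) auto

lemma lexle_antisym:
  "lexle R xs ys \<Longrightarrow> lexle R ys xs \<Longrightarrow> list_all2 (\<lambda>x y. R x y \<and> R y x) xs ys"
proof (induction xs arbitrary: ys)
  case Nil then show ?case by (cases ys) auto
next
  case Cons then show ?case by (cases ys) auto
qed

lemma lexle_cong:
  "\<forall>x\<in>set xs \<union> set ys. \<forall>y\<in>set xs \<union> set ys. R x y = R' x y \<Longrightarrow> lexle R xs ys = lexle R' xs ys"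
proof (induction xs arbitrary: ys)
  case Cons then show ?case by (cases ys) auto
qed simp

definition total_preorder_on :: "'a set \<Rightarrow> ('a \<Rightarrow> 'a \<Rightarrow> bool) \<Rightarrow> bool" where
  "total_preorder_on U R \<longleftrightarrow> (\<forall>x\<in>U. \<forall>y\<in>U. R x y \<or> R y x) \<and>
     (\<forall>x\<in>U. \<forall>y\<in>U. \<forall>z\<in>U. R x y \<longrightarrow> R y z \<longrightarrow> R x z)"

lemma total_preorder_on_total: "total_preorder_on U R \<Longrightarrow> x \<in> U \<Longrightarrow> y \<in> U \<Longrightarrow> R x y \<or> R y x"
  unfolding total_preorder_on_def by blast

lemma total_preorder_on_refl: "total_preorder_on U R \<Longrightarrow> x \<in> U \<Longrightarrow> R x x"
  using total_preorder_on_total by fastforce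

lemma total_preorder_on_trans:
  "total_preorder_on U R \<Longrightarrow> x \<in> U \<Longrightarrow> y \<in> U \<Longrightarrow> z \<in> U \<Longrightarrow> R x y \<Longrightarrow> R y z \<Longrightarrow> R x z"
  unfolding total_preorder_on_def by blast

lemma total_preorder_on_subset: "total_preorder_on U R \<Longrightarrow> V \<subseteq> U \<Longrightarrow> total_preorder_on V R"
  unfolding total_preorder_on_def by blast

lemma lexle_total:
  "total_preorder_on U R \<Longrightarrow> set xs \<subseteq> U \<Longrightarrow> set ys \<subseteq> U \<Longrightarrow> lexle R xs ys \<or> lexle R ys xs"
proof (induction xs arbitrary: ys)
  case (Cons x xs)
  show ?case
  proof (cases ys)
    case (Cons y ys')
    with Cons.prems have "R x y \<or> R y x" by (simp add: total_preorder_on_total)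
    with Cons.IH[of ys'] Cons.prems \<open>ys = y # ys'\<close> show ?thesis by auto
  qed simp
qed simp

lemma lexle_trans:
  assumes R: "total_preorder_on U R"
  shows "set xs \<subseteq> U \<Longrightarrow> set ys \<subseteq> U \<Longrightarrow> set zs \<subseteq> U \<Longrightarrow>
    lexle R xs ys \<Longrightarrow> lexle R ys zs \<Longrightarrow> lexle R xs zs"
proof (induction xs arbitrary: ys zs)
  case (Cons x xs)
  from Cons.prems(4) obtain y ys' where ys: "ys = y # ys'"
    by (cases ys) auto
  from Cons.prems(5) obtain z zs' where zs: "zs = z # zs'"
    unfolding ys by (cases zs) auto
  have U: "x \<in> U" "y \<in> U" "z \<in> U"
    using Cons.prems(1-3) ys zs by auto
  from Cons.prems(4,5) have xy: "R x y" "R y x \<Longrightarrow> lexle R xs ys'"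
    and yz: "R y z" "R z y \<Longrightarrow> lexle R ys' zs'"
    unfolding ys zs by simp_all
  have "R x z"
    using total_preorder_on_trans[OF R U xy(1) yz(1)] .
  moreover have "lexle R xs zs'" if "R z x"
  proof -
    have "R y x" "R z y"
      using total_preorder_on_trans[OF R U(2,3,1) yz(1) that]
        total_preorder_on_trans[OF R U(3,1,2) that xy(1)] by auto
    then show ?thesis
      using Cons.IH[of ys' zs'] Cons.prems(1-3) xy(2) yz(2) ys zs by simp
  qed
  ultimately show ?case
    using zs by simp
qed simp

lemma lexle_equiv_cong:
  assumes R: "total_preorder_on U R"
  shows "set xs \<subseteq> U \<Longrightarrow> set ys \<subseteq> U \<Longrightarrow> set xs' \<subseteq> U \<Longrightarrow> set ys' \<subseteq> U \<Longrightarrow>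
    list_all2 (\<lambda>x y. R x y \<and> R y x) xs xs' \<Longrightarrow> list_all2 (\<lambda>x y. R x y \<and> R y x) ys ys' \<Longrightarrow>
    lexle R xs ys = lexle R xs' ys'"
proof (induction xs arbitrary: xs' ys ys')
  case (Cons x xs)
  from Cons.prems(5) obtain x' xs'' where xs': "xs' = x' # xs''"
    by (cases xs') auto
  show ?case
  proof (cases ys)
    case (Cons y ys'')
    with Cons.prems(6) obtain y' ys''' where ys': "ys' = y' # ys'''"
      by (cases ys') auto
    have U: "x \<in> U" "x' \<in> U" "y \<in> U" "y' \<in> U"
      using Cons.prems(1-4) xs' ys' \<open>ys = _\<close> by auto
    have eq: "R x x'" "R x' x" "R y y'" "R y' y"
      using Cons.prems(5,6) xs' ys' \<open>ys = _\<close> by auto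
    have "R x y = R x' y'" "R y x = R y' x'"
      using total_preorder_on_trans[OF R] U eq by meson+
    moreover have "lexle R xs ys'' = lexle R xs'' ys'''"
      using Cons.IH Cons.prems xs' ys' \<open>ys = _\<close> by simp
    ultimately show ?thesis
      using xs' ys' \<open>ys = _\<close> by simp
  qed (use xs' Cons.prems(6) in simp)
qed simp

lemma lexle_snoc_least:
  assumes "total_preorder_on UNIV R" "\<forall>z. R e z"
  shows "lexle R (xs @ [e]) ys \<longleftrightarrow> lexle R xs ys \<and> \<not> lexle R ys xs"
proof (induction xs arbitrary: ys)
  case Nil
  then show ?case
    using assms(2) by (cases ys) auto
next
  case (Cons x xs)
  then show ?case
    using total_preorder_on_total[OF assms(1), of x] by (cases ys) auto
qed

section \<open>Greedy lexicographically maximal subsequences\<close>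

lemma set_mono_subseq: "subseq xs ys \<Longrightarrow> set xs \<subseteq> set ys"
  by (induction rule: list_emb.induct) auto

fun max_subseq :: "('a \<Rightarrow> 'a \<Rightarrow> bool) \<Rightarrow> 'a list \<Rightarrow> 'a list" where
  "max_subseq R [] = []"
| "max_subseq R (a # as) = (if \<forall>x\<in>set as. R x a then a # max_subseq R as else max_subseq R as)"

lemma subseq_max_subseq: "subseq (max_subseq R As) As"
  by (induction As) auto

lemma set_max_subseq: "set (max_subseq R As) \<subseteq> set As"
  by (induction As) auto

lemma sorted_max_subseq: "sorted_wrt (\<lambda>x y. R y x) (max_subseq R As)"
proof (induction As)
  case (Cons a as)
  then show ?case
    using set_max_subseq[of R as] by fastforce
qed simp

lemma max_subseq_sorted: "sorted_wrt (\<lambda>x y. R y x) As \<Longrightarrow> max_subseq R As = As"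
  by (induction As) auto

lemma max_subseq_eq_Nil_iff [simp]: "max_subseq R xs = [] \<longleftrightarrow> xs = []"
  by (induction xs) auto

lemma max_subseq_snoc_above: "\<forall>x\<in>set xs. \<not> R y x \<Longrightarrow> max_subseq R (xs @ [y]) = [y]"
  by (induction xs) auto

lemma max_subseq_hd:
  assumes "total_preorder_on (set As) R" "As \<noteq> []"
  shows "\<exists>h hs. max_subseq R As = h # hs \<and> (\<forall>y\<in>set As. R y h)"
  using assms
proof (induction As)
  case (Cons a as)
  show ?case
  proof (cases "\<forall>x\<in>set as. R x a")
    case True
    then show ?thesis
      using total_preorder_on_refl[OF Cons.prems(1)] by simp
  next
    case False
    then obtain x where x: "x \<in> set as" "\<not> R x a" by blast
    have "total_preorder_on (set as) R"
      using Cons.prems(1) by (rule total_preorder_on_subset) auto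
    moreover have "as \<noteq> []"
      using x by auto
    ultimately obtain h hs where h: "max_subseq R as = h # hs" "\<forall>y\<in>set as. R y h"
      using Cons.IH by blast
    have U: "a \<in> set (a # as)" "x \<in> set (a # as)" "h \<in> set (a # as)"
      using x h(1) set_max_subseq[of R as] by auto
    have "R a x"
      using total_preorder_on_total[OF Cons.prems(1) U(1,2)] x(2) by auto
    then have "R a h"
      using total_preorder_on_trans[OF Cons.prems(1) U] x h(2) by blast
    moreover have "max_subseq R (a # as) = h # hs"
      using False h(1) by simp
    ultimately show ?thesis
      using h(2) by auto
  qed
qed simp

lemma lexle_max_subseq:
  assumes "total_preorder_on (set As) R" "subseq Es As"
  shows "lexle R Es (max_subseq R As)"
  using assms
proof (induction As arbitrary: Es)
  case (Cons a as)
  have R: "total_preorder_on (set as) R"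
    using Cons.prems(1) by (rule total_preorder_on_subset) auto
  have IH: "lexle R Fs (max_subseq R as)" if "subseq Fs as" for Fs
    using Cons.IH[OF R that] .
  show ?case
  proof (cases "\<forall>x\<in>set as. R x a")
    case a_max: True
    from Cons.prems(2) consider "Es = []" | (skip) e Es' where "Es = e # Es'" "subseq (e # Es') as"
      | (take) Es' where "Es = a # Es'" "subseq Es' as"
      by (cases rule: list_emb.cases; cases Es) auto
    then show ?thesis
    proof cases
      case skip
      have "R e a"
        using a_max set_mono_subseq[OF skip(2)] by simp
      moreover have "lexle R Es' (max_subseq R as)"
        using IH subseq_Cons'[OF skip(2)] .
      ultimately show ?thesis
        using skip(1) a_max by simp
    next
      case take
      then show ?thesis
        using a_max IH total_preorder_on_refl[OF Cons.prems(1)] by simp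
    qed simp
  next
    case False
    then obtain x where x: "x \<in> set as" "\<not> R x a" by blast
    obtain h hs where h: "max_subseq R (a # as) = h # hs" "\<forall>y\<in>set (a # as). R y h"
      using max_subseq_hd[OF Cons.prems(1)] by blast
    have U: "x \<in> set (a # as)" "h \<in> set (a # as)" "a \<in> set (a # as)"
      using x h(1) set_max_subseq[of R "a # as"] by auto
    have "\<not> R h a"
      using total_preorder_on_trans[OF Cons.prems(1) U] h(2) x by auto
    with h(2) have "lexle R (a # Es') (max_subseq R (a # as))" for Es'
      using h(1) by simp
    moreover from Cons.prems(2) have "subseq Es as \<or> (\<exists>Es'. Es = a # Es')"
      by (cases rule: list_emb.cases) auto
    ultimately show ?thesis
      using IH False by auto
  qed
qed (auto dest: list_emb_Nil2)

lemma lexmax_iff: "lexmax R As Cs \<longleftrightarrow> subseq Cs As \<and> (\<forall>Es. subseq Es As \<longrightarrow> lexle R Es Cs)"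
  by (simp add: lexmax_def Ball_def)

lemma lexmax_cong:
  assumes "\<forall>x\<in>set As. \<forall>y\<in>set As. R x y = R' x y"
  shows "lexmax R As = lexmax R' As"
proof -
  have "lexle R Es Cs = lexle R' Es Cs" if "subseq Es As" "subseq Cs As" for Es Cs
    using assms set_mono_subseq[OF that(1)] set_mono_subseq[OF that(2)] by (intro lexle_cong) blast
  then show ?thesis
    unfolding lexmax_iff by blast
qed

lemma lexmax_max_subseq: "total_preorder_on (set As) R \<Longrightarrow> lexmax R As (max_subseq R As)"
  unfolding lexmax_iff using subseq_max_subseq lexle_max_subseq by blast

lemma lexmax_equiv_max_subseq:
  assumes "total_preorder_on (set As) R" "lexmax R As Cs"
  shows "list_all2 (\<lambda>x y. R x y \<and> R y x) Cs (max_subseq R As)"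
proof (rule lexle_antisym)
  show "lexle R Cs (max_subseq R As)"
    using assms lexle_max_subseq unfolding lexmax_iff by blast
  show "lexle R (max_subseq R As) Cs"
    using assms(2) subseq_max_subseq unfolding lexmax_iff by blast
qed

text \<open>The paper's order compares arbitrarily chosen lexicographically maximal subsequences;
  for a total preorder the choice is irrelevant and the greedy one may be used.\<close>
lemma lexle_some_lexmax:
  assumes R: "total_preorder_on U R" and U: "set As \<subseteq> U" "set Bs \<subseteq> U"
  shows "lexle R (SOME Cs. lexmax R As Cs) (SOME Ds. lexmax R Bs Ds) =
    lexle R (max_subseq R As) (max_subseq R Bs)"
proof (rule lexle_equiv_cong[OF R])
  have RA: "total_preorder_on (set As) R" and RB: "total_preorder_on (set Bs) R"
    using R U total_preorder_on_subset by blast+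
  have CA: "lexmax R As (SOME Cs. lexmax R As Cs)" and DB: "lexmax R Bs (SOME Ds. lexmax R Bs Ds)"
    using someI[where P = "lexmax R As", OF lexmax_max_subseq[OF RA]]
      someI[where P = "lexmax R Bs", OF lexmax_max_subseq[OF RB]] .
  show "list_all2 (\<lambda>x y. R x y \<and> R y x) (SOME Cs. lexmax R As Cs) (max_subseq R As)"
    using lexmax_equiv_max_subseq[OF RA CA] .
  show "list_all2 (\<lambda>x y. R x y \<and> R y x) (SOME Ds. lexmax R Bs Ds) (max_subseq R Bs)"
    using lexmax_equiv_max_subseq[OF RB DB] .
  show "set (SOME Cs. lexmax R As Cs) \<subseteq> U" "set (SOME Ds. lexmax R Bs Ds) \<subseteq> U"
    using CA DB U set_mono_subseq unfolding lexmax_iff by blast+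
  show "set (max_subseq R As) \<subseteq> U" "set (max_subseq R Bs) \<subseteq> U"
    using U set_max_subseq by fastforce+
qed

lemma lexle_some_lexmax_cong:
  assumes R: "total_preorder_on U R" and U: "set As \<subseteq> U" "set Bs \<subseteq> U"
    and agree: "\<forall>x\<in>set As \<union> set Bs. \<forall>y\<in>set As \<union> set Bs. R' x y = R x y"
  shows "lexle R' (SOME Cs. lexmax R' As Cs) (SOME Ds. lexmax R' Bs Ds) =
    lexle R (max_subseq R As) (max_subseq R Bs)"
proof -
  have "lexmax R' As = lexmax R As" "lexmax R' Bs = lexmax R Bs"
    using agree by (blast intro: lexmax_cong)+
  moreover have "lexmax R As (SOME Cs. lexmax R As Cs)" "lexmax R Bs (SOME Ds. lexmax R Bs Ds)"
    using R U by (blast intro: someI lexmax_max_subseq total_preorder_on_subset)+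
  then have "lexle R' (SOME Cs. lexmax R As Cs) (SOME Ds. lexmax R Bs Ds) =
      lexle R (SOME Cs. lexmax R As Cs) (SOME Ds. lexmax R Bs Ds)"
    using agree set_mono_subseq unfolding lexmax_iff by (intro lexle_cong) blast
  ultimately show ?thesis
    using lexle_some_lexmax[OF R U] by simp
qed

lemma splitw_not_Nil [simp]: "splitw n xs \<noteq> []"
  by (induction xs) (auto simp: Let_def)

lemma length_splitw: "length (splitw n xs) = Suc (count_list xs n)"
proof (induction xs)
  case (Cons x xs)
  then show ?case
    using splitw_not_Nil[of n xs] by (cases "splitw n xs") (auto simp: Let_def)
qed simp

lemma sum_length_splitw: "sum_list (map length (splitw n xs)) + count_list xs n = length xs"
proof (induction xs)
  case (Cons x xs)
  then show ?case
    using splitw_not_Nil[of n xs] by (cases "splitw n xs") (auto simp: Let_def)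
qed simp

lemma splitw_piece:
  "p \<in> set (splitw n xs) \<Longrightarrow> n \<notin> set p \<and> set p \<subseteq> set xs"
proof (induction xs arbitrary: p)
  case (Cons x xs)
  obtain h t where ht: "splitw n xs = h # t"
    using splitw_not_Nil[of n xs] by (cases "splitw n xs") auto
  show ?case
  proof (cases "x = n")
    case False
    then have "p = x # h \<or> p \<in> set t"
      using Cons.prems ht by (auto simp: Let_def)
    then show ?thesis
      using Cons.IH[of h] Cons.IH[of p] ht False by auto
  qed (use Cons in auto)
qed simp

lemma splitw_piece_in_S:
  assumes "\<forall>z\<in>set X. n \<le> z" "a \<in> set (splitw n X)"
  shows "a \<in> S (Suc n)"
  unfolding S_def
proof (intro CollectI ballI)
  fix z assume "z \<in> set a"
  then have "z \<in> set X" "z \<noteq> n"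
    using splitw_piece[OF assms(2)] by auto
  then show "Suc n \<le> z"
    using assms(1) by fastforce
qed

lemma splitw_no_sep: "n \<notin> set xs \<Longrightarrow> splitw n xs = [xs]"
  by (induction xs) (auto simp: Let_def)

lemma splitw_append_sep: "n \<notin> set A \<Longrightarrow> splitw n (A @ n # ys) = A # splitw n ys"
  by (induction A) (auto simp: Let_def)

lemma joinw_Cons: "As \<noteq> [] \<Longrightarrow> joinw n (A # As) = A @ n # joinw n As"
  by (cases As) auto

lemma joinw_splitw [simp]: "joinw n (splitw n xs) = xs"
proof (induction xs)
  case (Cons x xs)
  obtain h t where ht: "splitw n xs = h # t"
    using splitw_not_Nil[of n xs] by (cases "splitw n xs") auto
  show ?case
  proof (cases "x = n")
    case True
    then show ?thesis using Cons ht by (simp add: joinw_Cons)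
  next
    case False
    then show ?thesis using Cons ht by (cases t) (auto simp: Let_def)
  qed
qed simp

lemma splitw_joinw: "Cs \<noteq> [] \<Longrightarrow> \<forall>c\<in>set Cs. n \<notin> set c \<Longrightarrow> splitw n (joinw n Cs) = Cs"
proof (induction Cs)
  case (Cons C Cs)
  then show ?case
    by (cases Cs) (simp_all add: splitw_no_sep splitw_append_sep)
qed simp

lemma splitw_append:
  "splitw n (xs @ ys) = butlast (splitw n xs) @ [last (splitw n xs) @ hd (splitw n ys)] @ tl (splitw n ys)"
proof (induction xs)
  case Nil
  then show ?case
    using splitw_not_Nil[of n ys] by (cases "splitw n ys") auto
next
  case (Cons x xs)
  obtain h t where ht: "splitw n xs = h # t"
    using splitw_not_Nil[of n xs] by (cases "splitw n xs") auto
  show ?case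
  proof (cases "x = n")
    case True
    then show ?thesis using Cons ht by simp
  next
    case False
    then show ?thesis using Cons ht by (cases t) (auto simp: Let_def)
  qed
qed

lemma splitw_snoc_sep: "splitw n (xs @ [n]) = splitw n xs @ [[]]"
  using splitw_append[of n xs "[n]"] by (simp add: append_butlast_last_id)

lemma splitw_snoc: "x \<noteq> n \<Longrightarrow> splitw n (xs @ [x]) = butlast (splitw n xs) @ [last (splitw n xs) @ [x]]"
  using splitw_append[of n xs "[x]"] by (simp add: Let_def)

lemma set_joinw: "set (joinw n As) \<subseteq> insert n (\<Union> (set ` set As))"
proof (induction As)
  case (Cons A As)
  then show ?case by (cases As) auto
qed simp

lemma sep_in_joinw: "2 \<le> length As \<Longrightarrow> n \<in> set (joinw n As)"
  by (cases As rule: remdups_adj.cases) auto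

lemma joinw_snoc: "As \<noteq> [] \<Longrightarrow> joinw n (As @ [C]) = joinw n As @ n # C"
proof (induction As)
  case (Cons A As)
  then show ?case by (cases As) (auto simp: joinw_Cons)
qed simp

lemma length_splitw_piece:
  "p \<in> set (splitw n xs) \<Longrightarrow> length p + count_list xs n \<le> length xs"
  using member_le_sum_list[of "length p" "map length (splitw n xs)"] sum_length_splitw[of n xs] by auto

lemma add_le_sum_list:
  fixes f :: "'a \<Rightarrow> nat"
  assumes "x \<in> set xs" "y \<in> set xs" "x \<noteq> y"
  shows "f x + f y \<le> sum_list (map f xs)"
proof -
  have "y \<in> set (remove1 x xs)"
    using assms by (simp add: in_set_remove1)
  then have "f y \<le> sum_list (map f (remove1 x xs))"
    by (simp add: member_le_sum_list)
  then show ?thesis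
    using sum_list_map_remove1[OF assms(1), of f] by simp
qed

text \<open>This is why fuel exceeding the length of X @ Y suffices for all recursive calls of le_aux.\<close>
lemma length_splitw_pieces_less:
  assumes "x \<in> set (splitw n X) \<union> set (splitw n Y)" "y \<in> set (splitw n X) \<union> set (splitw n Y)"
    and "x \<noteq> y" "n \<in> set (X @ Y)"
  shows "length x + length y < length X + length Y"
proof -
  have count: "count_list X n + count_list Y n \<ge> 1"
    using assms(4) count_list_0_iff[of X n] count_list_0_iff[of Y n] by auto
  have same: "length x + length y < length Z"
    if "x \<in> set (splitw n Z)" "y \<in> set (splitw n Z)" for Z
  proof -
    have "length x + length y \<le> sum_list (map length (splitw n Z))"
      using add_le_sum_list[OF that assms(3)] .
    moreover have "count_list Z n \<ge> 1"
      using that assms(3) length_splitw[of n Z] by (cases "splitw n Z" rule: remdups_adj.cases) auto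
    ultimately show ?thesis
      using sum_length_splitw[of n Z] by simp
  qed
  from assms(1,2) consider "x \<in> set (splitw n X)" "y \<in> set (splitw n X)"
    | "x \<in> set (splitw n Y)" "y \<in> set (splitw n Y)"
    | "x \<in> set (splitw n X)" "y \<in> set (splitw n Y)"
    | "x \<in> set (splitw n Y)" "y \<in> set (splitw n X)"
    by blast
  then show ?thesis
  proof cases
    case 3
    then show ?thesis
      using length_splitw_piece[of x n X] length_splitw_piece[of y n Y] count by linarith
  next
    case 4
    then show ?thesis
      using length_splitw_piece[of y n X] length_splitw_piece[of x n Y] count by linarith
  qed (use same in fastforce)+
qed

section \<open>The order on words is a total preorder\<close>

lemma le_aux_refl: "le_aux d x x"
  by (induction d arbitrary: x) (simp_all add: Let_def lexle_refl)

lemma wle_refl: "X \<precsim> X"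
  unfolding wle_def by (rule le_aux_refl)

definition fuel_indep :: "word \<Rightarrow> word \<Rightarrow> bool" where
  "fuel_indep X Y \<longleftrightarrow> (\<forall>d > length (X @ Y). le_aux d X Y = (X \<precsim> Y))"

lemma fuel_indep_refl: "fuel_indep X X"
  unfolding fuel_indep_def by (simp add: le_aux_refl wle_refl)

lemma le_aux_unfold:
  assumes R: "total_preorder_on U (\<precsim>)" and indep: "\<forall>x\<in>U. \<forall>y\<in>U. fuel_indep x y"
    and U: "set (splitw n X) \<subseteq> U" "set (splitw n Y) \<subseteq> U"
    and n: "\<forall>z\<in>set (X @ Y). n \<le> z" and d: "length (X @ Y) < d"
  shows "le_aux d X Y =
    lexle (\<precsim>) (max_subseq (\<precsim>) (splitw n X)) (max_subseq (\<precsim>) (splitw n Y))"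
proof (cases "n \<in> set (X @ Y)")
  case False
  then have "splitw n X = [X]" "splitw n Y = [Y]"
    by (auto simp: splitw_no_sep)
  with U indep d show ?thesis
    by (simp add: fuel_indep_def)
next
  case True
  then have XY: "X @ Y \<noteq> []" and Min: "Min (set (X @ Y)) = n"
    using n by (auto intro: Min_eqI)
  obtain k where k: "d = Suc k"
    using d by (cases d) auto
  have "\<forall>x\<in>set (splitw n X) \<union> set (splitw n Y). \<forall>y\<in>set (splitw n X) \<union> set (splitw n Y).
      le_aux k x y = (x \<precsim> y)"
  proof (intro ballI)
    fix x y assume xy: "x \<in> set (splitw n X) \<union> set (splitw n Y)" "y \<in> set (splitw n X) \<union> set (splitw n Y)"
    show "le_aux k x y = (x \<precsim> y)"
    proof (cases "x = y")
      case False
      then have "length (x @ y) < k"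
        using length_splitw_pieces_less[OF xy False True] d k by simp
      with xy U indep show ?thesis
        unfolding fuel_indep_def by blast
    qed (simp add: le_aux_refl wle_refl)
  qed
  then have "lexle (le_aux k) (SOME C. lexmax (le_aux k) (splitw n X) C) (SOME D. lexmax (le_aux k) (splitw n Y) D)
      = lexle (\<precsim>) (max_subseq (\<precsim>) (splitw n X)) (max_subseq (\<precsim>) (splitw n Y))"
    by (intro lexle_some_lexmax_cong[OF R U])
  then show ?thesis
    unfolding k le_aux.simps if_not_P[OF XY] Let_def Min .
qed

text \<open>Well-definedness of the order, by induction on the set of symbols: the pieces of words
  avoid their minimal symbol.\<close>
lemma wle_fuel_indep_total_trans:
  "fuel_indep A B \<and> (A \<precsim> B \<or> B \<precsim> A) \<and> (A \<precsim> B \<longrightarrow> B \<precsim> C \<longrightarrow> A \<precsim> C)"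
proof (induction "card (set (A @ B @ C))" arbitrary: A B C rule: less_induct)
  case less
  show ?case
  proof (cases "A @ B @ C = []")
    case True
    then show ?thesis
      by (simp add: fuel_indep_refl wle_refl)
  next
    case False
    define n where "n = Min (set (A @ B @ C))"
    define U where "U = set (splitw n A) \<union> set (splitw n B) \<union> set (splitw n C)"
    have n: "n \<in> set (A @ B @ C)" "\<forall>z\<in>set (A @ B @ C). n \<le> z"
      unfolding n_def using False by (intro Min_in ballI Min_le; simp)+
    have IH: "fuel_indep x y \<and> (x \<precsim> y \<or> y \<precsim> x) \<and> (x \<precsim> y \<longrightarrow> y \<precsim> z \<longrightarrow> x \<precsim> z)"
      if "x \<in> U" "y \<in> U" "z \<in> U" for x y z
    proof (rule less)
      have "set (x @ y @ z) \<subseteq> set (A @ B @ C) - {n}"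
        using that splitw_piece unfolding U_def by fastforce
      with n(1) show "card (set (x @ y @ z)) < card (set (A @ B @ C))"
        by (intro psubset_card_mono) auto
    qed
    have R: "total_preorder_on U (\<precsim>)" and indep: "\<forall>x\<in>U. \<forall>y\<in>U. fuel_indep x y"
      using IH unfolding total_preorder_on_def by blast+
    define M where "M X = max_subseq (\<precsim>) (splitw n X)" for X
    have sets: "set (splitw n X) \<subseteq> U" if "X \<in> {A, B, C}" for X
      using that unfolding U_def by blast
    have M_sets: "set (M X) \<subseteq> U" if "X \<in> {A, B, C}" for X
      using sets[OF that] set_max_subseq[of "(\<precsim>)" "splitw n X"] unfolding M_def by blast
    have unfold: "le_aux d X Y = lexle (\<precsim>) (M X) (M Y)"
      if "X \<in> {A, B, C}" "Y \<in> {A, B, C}" "length (X @ Y) < d" for X Y d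
      unfolding M_def using that n(2) by (intro le_aux_unfold[OF R indep] sets) auto
    then have wle: "X \<precsim> Y \<longleftrightarrow> lexle (\<precsim>) (M X) (M Y)"
      if "X \<in> {A, B, C}" "Y \<in> {A, B, C}" for X Y
      using that unfolding wle_def by blast
    have "fuel_indep A B"
      unfolding fuel_indep_def using unfold[of A B] wle[of A B] by simp
    moreover have "A \<precsim> B \<or> B \<precsim> A"
      using lexle_total[OF R M_sets M_sets] wle[of A B] wle[of B A] by simp
    moreover have "A \<precsim> B \<longrightarrow> B \<precsim> C \<longrightarrow> A \<precsim> C"
      using lexle_trans[OF R M_sets[of A] M_sets[of B] M_sets[of C]] wle[of A B] wle[of B C] wle[of A C]
      by simp
    ultimately show ?thesis
      by blast
  qed
qed

lemma wle_total: "A \<precsim> B \<or> B \<precsim> A"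
  using wle_fuel_indep_total_trans by blast

lemma wle_trans: "A \<precsim> B \<Longrightarrow> B \<precsim> C \<Longrightarrow> A \<precsim> C"
  using wle_fuel_indep_total_trans by blast

lemma total_preorder_on_wle: "total_preorder_on U (\<precsim>)"
  unfolding total_preorder_on_def using wle_total wle_trans by blast

lemma wle_unfold:
  assumes "\<forall>z\<in>set (X @ Y). n \<le> z"
  shows "X \<precsim> Y \<longleftrightarrow> lexle (\<precsim>) (max_subseq (\<precsim>) (splitw n X)) (max_subseq (\<precsim>) (splitw n Y))"
proof -
  have "le_aux (Suc (length (X @ Y))) X Y =
      lexle (\<precsim>) (max_subseq (\<precsim>) (splitw n X)) (max_subseq (\<precsim>) (splitw n Y))"
    using wle_fuel_indep_total_trans assms
    by (intro le_aux_unfold[OF total_preorder_on_wle, of UNIV]) auto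
  then show ?thesis
    by (simp only: wle_def[of X Y])
qed

lemma Nil_wle: "[] \<precsim> Z"
proof (induction "length Z" arbitrary: Z rule: less_induct)
  case less
  show ?case
  proof (cases "Z = []")
    case False
    define n where "n = Min (set Z)"
    have n: "n \<in> set Z" "\<forall>z\<in>set ([] @ Z). n \<le> z"
      unfolding n_def using False by simp_all
    obtain h hs where h: "max_subseq (\<precsim>) (splitw n Z) = h # hs" "h \<in> set (splitw n Z)"
      using max_subseq_hd[OF total_preorder_on_wle splitw_not_Nil] set_max_subseq
      by (metis list.set_intros(1) subsetD)
    have "count_list Z n \<ge> 1"
      using n(1) count_list_0_iff[of Z n] by simp
    then have "length h < length Z"
      using length_splitw_piece[OF h(2)] by simp
    then have "[] \<precsim> h"
      by (rule less)
    then show ?thesis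
      using wle_unfold[OF n(2)] h(1) by simp
  qed (simp add: wle_refl)
qed

section \<open>Normal forms\<close>

lemma sorted_wrt_wle_iff_nth_Suc:
  "sorted_wrt (\<lambda>x y. y \<precsim> x) As \<longleftrightarrow> (\<forall>i. Suc i < length As \<longrightarrow> As ! Suc i \<precsim> As ! i)"
  by (rule sorted_wrt_iff_nth_Suc_transp) (auto intro: transpI wle_trans)

lemma NF_min_separator:
  assumes "NF X" "X \<noteq> []"
  obtains n where "n \<in> set X" "\<forall>z\<in>set X. n \<le> z"
    "sorted_wrt (\<lambda>x y. y \<precsim> x) (splitw n X)" "\<forall>a\<in>set (splitw n X). NF a"
proof -
  obtain n As where X: "X = joinw n As" "2 \<le> length As" "\<forall>a\<in>set As. a \<in> S (Suc n) \<and> NF a"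
    "\<forall>i. Suc i < length As \<longrightarrow> As ! Suc i \<precsim> As ! i"
    using assms by (cases rule: NF.cases) auto
  have split: "splitw n X = As"
    using X(1-3) splitw_joinw[of As n] unfolding S_def by fastforce
  show thesis
  proof (rule that)
    show "n \<in> set X"
      using X(1,2) sep_in_joinw by simp
    show "\<forall>z\<in>set X. n \<le> z"
      using X(1,3) set_joinw[of n As] unfolding S_def by (fastforce dest: Suc_leD)
    show "sorted_wrt (\<lambda>x y. y \<precsim> x) (splitw n X)" "\<forall>a\<in>set (splitw n X). NF a"
      using X(3,4) split sorted_wrt_wle_iff_nth_Suc by simp_all
  qed
qed

lemma NF_splitw:
  assumes "NF X" "\<forall>z\<in>set X. k \<le> z"
  shows "sorted_wrt (\<lambda>x y. y \<precsim> x) (splitw k X) \<and> (\<forall>a\<in>set (splitw k X). NF a)"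
proof (cases "X = []")
  case False
  then obtain n where n: "n \<in> set X" "\<forall>z\<in>set X. n \<le> z"
    "sorted_wrt (\<lambda>x y. y \<precsim> x) (splitw n X)" "\<forall>a\<in>set (splitw n X). NF a"
    using NF_min_separator[OF assms(1)] by blast
  show ?thesis
  proof (cases "k = n")
    case False
    then have "k \<notin> set X"
      using assms(2) n(1,2) by fastforce
    then show ?thesis
      using assms(1) by (simp add: splitw_no_sep)
  qed (use n in simp)
qed (simp add: NF_empty)

lemma NF_wle_iff:
  assumes "NF X" "NF Y" "\<forall>z\<in>set (X @ Y). n \<le> z"
  shows "X \<precsim> Y \<longleftrightarrow> lexle (\<precsim>) (splitw n X) (splitw n Y)"
  using wle_unfold[OF assms(3)] NF_splitw[OF assms(1)] NF_splitw[OF assms(2)] assms(3)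
  by (simp add: max_subseq_sorted)

lemma NF_joinw:
  "2 \<le> length As \<Longrightarrow> \<forall>a\<in>set As. a \<in> S (Suc n) \<and> NF a \<Longrightarrow> sorted_wrt (\<lambda>x y. y \<precsim> x) As \<Longrightarrow>
    NF (joinw n As)"
  by (rule NF_join) (simp_all add: sorted_wrt_wle_iff_nth_Suc)

lemma NF_unique:
  assumes "NF X" "NF Y" "X \<precsim> Y" "Y \<precsim> X"
  shows "X = Y"
  using assms
proof (induction "length X + length Y" arbitrary: X Y rule: less_induct)
  case less
  show ?case
  proof (cases "X @ Y = []")
    case False
    define n where "n = Min (set (X @ Y))"
    have n: "n \<in> set (X @ Y)" "\<forall>z\<in>set (X @ Y). n \<le> z"
      unfolding n_def using False by (intro Min_in ballI Min_le; simp)+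
    then have n': "\<forall>z\<in>set (Y @ X). n \<le> z"
      by auto
    have NF: "\<forall>a\<in>set (splitw n X). NF a" "\<forall>a\<in>set (splitw n Y). NF a"
      using NF_splitw[OF less.prems(1), of n] NF_splitw[OF less.prems(2), of n] n(2) by auto
    have "lexle (\<precsim>) (splitw n X) (splitw n Y)" "lexle (\<precsim>) (splitw n Y) (splitw n X)"
      using NF_wle_iff[OF less.prems(1,2) n(2)] NF_wle_iff[OF less.prems(2,1) n'] less.prems(3,4)
      by simp_all
    then have equiv: "list_all2 (\<lambda>x y. x \<precsim> y \<and> y \<precsim> x) (splitw n X) (splitw n Y)"
      by (rule lexle_antisym)
    then have "count_list X n = count_list Y n"
      using list_all2_lengthD[OF equiv] length_splitw[of n X] length_splitw[of n Y] by simp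
    with n(1) have count: "count_list X n \<ge> 1" "count_list Y n \<ge> 1"
      using count_list_0_iff[of X n] count_list_0_iff[of Y n] by auto
    have "list_all2 (=) (splitw n X) (splitw n Y)"
    proof (rule list.rel_mono_strong[OF equiv])
      fix x y
      assume xy: "x \<in> set (splitw n X)" "y \<in> set (splitw n Y)" "x \<precsim> y \<and> y \<precsim> x"
      have "length x + length y < length X + length Y"
        using length_splitw_piece[OF xy(1)] length_splitw_piece[OF xy(2)] count by linarith
      moreover have "NF x" "NF y"
        using NF xy(1,2) by blast+
      ultimately show "x = y"
        using less.hyps xy(3) by blast
    qed
    then show ?thesis
      by (metis list_all2_eq joinw_splitw)
  qed simp
qed

lemma not_wle_Nil:
  assumes "NF B" "B \<noteq> []"
  shows "\<not> B \<precsim> []"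
proof -
  obtain n where n: "n \<in> set B" "\<forall>z\<in>set B. n \<le> z"
    using NF_min_separator[OF assms] by blast
  have "length (splitw n B) \<ge> 2"
    using length_splitw[of n B] n(1) count_list_0_iff[of B n] by simp
  then obtain b1 b2 bs where "splitw n B = b1 # b2 # bs"
    by (cases "splitw n B" rule: remdups_adj.cases) auto
  moreover have "[] \<precsim> b1"
    by (rule Nil_wle)
  ultimately show ?thesis
    using NF_wle_iff[OF assms(1) NF_empty, of n] n(2) by simp
qed

lemma NF_snoc:
  assumes "NF B" "\<forall>z\<in>set B. k \<le> z"
  shows "NF (B @ [k])"
proof (cases "k \<in> set B")
  case False
  with assms(2) have "B \<in> S (Suc k)"
    unfolding S_def by (auto simp: Suc_le_eq order.order_iff_strict)
  then have "NF (joinw k [B, []])"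
    using assms(1) by (intro NF_joinw) (auto simp: S_def NF_empty Nil_wle)
  then show ?thesis
    by simp
next
  case True
  then obtain n where n: "n \<in> set B" "\<forall>z\<in>set B. n \<le> z"
    "sorted_wrt (\<lambda>x y. y \<precsim> x) (splitw n B)" "\<forall>a\<in>set (splitw n B). NF a"
    using NF_min_separator[OF assms(1)] by (metis empty_iff list.set(1))
  with True assms(2) have "k = n"
    by (simp add: order_antisym)
  have "B @ [k] = joinw k (splitw k B @ [[]])"
    using joinw_snoc[of "splitw k B" k "[]"] by simp
  moreover have "NF (joinw k (splitw k B @ [[]]))"
  proof (rule NF_joinw)
    show "2 \<le> length (splitw k B @ [[]])"
      by (simp add: length_splitw)
    show "\<forall>a\<in>set (splitw k B @ [[]]). a \<in> S (Suc k) \<and> NF a"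
      using n(4) splitw_piece_in_S[OF assms(2)] NF_empty \<open>k = n\<close> by (auto simp: S_def)
    show "sorted_wrt (\<lambda>x y. y \<precsim> x) (splitw k B @ [[]])"
      using n(3) \<open>k = n\<close> by (simp add: sorted_wrt_append Nil_wle)
  qed
  ultimately show ?thesis
    by simp
qed

lemma wle_snoc_iff:
  assumes "NF X" "NF C" "\<forall>z\<in>set X. k \<le> z" "\<forall>z\<in>set C. k \<le> z"
  shows "X @ [k] \<precsim> C \<longleftrightarrow> X \<prec> C"
proof -
  have sorted: "sorted_wrt (\<lambda>x y. y \<precsim> x) (splitw k X @ [[]])" "sorted_wrt (\<lambda>x y. y \<precsim> x) (splitw k C)"
    using NF_splitw[OF assms(1,3)] NF_splitw[OF assms(2,4)] by (simp_all add: sorted_wrt_append Nil_wle)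
  have "\<forall>z\<in>set ((X @ [k]) @ C). k \<le> z"
    using assms(3,4) by auto
  from wle_unfold[OF this] have "X @ [k] \<precsim> C \<longleftrightarrow> lexle (\<precsim>) (splitw k X @ [[]]) (splitw k C)"
    unfolding splitw_snoc_sep max_subseq_sorted[OF sorted(1)] max_subseq_sorted[OF sorted(2)] .
  also have "\<dots> \<longleftrightarrow> lexle (\<precsim>) (splitw k X) (splitw k C) \<and> \<not> lexle (\<precsim>) (splitw k C) (splitw k X)"
    by (rule lexle_snoc_least[OF total_preorder_on_wle]) (simp add: Nil_wle)
  also have "\<dots> \<longleftrightarrow> X \<prec> C"
    unfolding wless_def using NF_wle_iff[OF assms(1,2), of k] NF_wle_iff[OF assms(2,1), of k] assms(3,4)
    by auto
  finally show ?thesis .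
qed

lemma Diamond_eqI:
  assumes "NF W" "wequiv W (A @ [n])"
  shows "Diamond n A = W"
  unfolding Diamond_def
proof (rule the_equality)
  fix W' assume "NF W' \<and> wequiv W' (A @ [n])"
  then show "W' = W"
    using NF_unique[OF _ assms(1)] assms(2) wle_trans unfolding wequiv_def by blast
qed (use assms in simp)

text \<open>The witness: replace the last 0-piece of B by its successor and keep the lexicographically
  maximal subsequence of the pieces.\<close>
lemma ex_NF_wequiv_snoc_1:
  assumes "NF B"
  shows "\<exists>W. NF W \<and> wequiv W (B @ [1])"
proof -
  define q where "q = splitw 0 B"
  define r where "r = max_subseq (\<precsim>) (butlast q @ [last q @ [1]])"
  have q: "q \<noteq> []" "\<forall>a\<in>set q. NF a \<and> a \<in> S 1"
    unfolding q_def using NF_splitw[OF assms] splitw_piece_in_S[of B 0] by auto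
  then have "last q \<in> set q"
    by simp
  then have "NF (last q @ [1])" "last q @ [1] \<in> S 1"
    using q(2) NF_snoc[of "last q" 1] by (auto simp: S_def)
  then have r: "r \<noteq> []" "\<forall>a\<in>set r. NF a \<and> a \<in> S 1" "sorted_wrt (\<lambda>x y. y \<precsim> x) r"
    unfolding r_def using q(2) set_max_subseq[of "(\<precsim>)" "butlast q @ [last q @ [1]]"]
    by (auto simp: sorted_max_subseq dest: in_set_butlastD)
  have "NF (joinw 0 r)"
  proof (cases "length r \<ge> 2")
    case True
    then show ?thesis
      using r(2,3) by (intro NF_joinw) auto
  next
    case False
    then obtain w where "r = [w]"
      using r(1) by (cases r rule: remdups_adj.cases) auto
    then show ?thesis
      using r(2) by simp
  qed
  moreover have "splitw 0 (joinw 0 r) = r"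
    using r(1,2) by (intro splitw_joinw) (auto simp: S_def)
  moreover have "splitw 0 (B @ [1]) = butlast q @ [last q @ [1]]"
    unfolding q_def by (rule splitw_snoc) simp
  ultimately show ?thesis
    using wle_unfold[of "joinw 0 r" "B @ [1]" 0] wle_unfold[of "B @ [1]" "joinw 0 r" 0]
      lexle_refl[of r "(\<precsim>)"] max_subseq_sorted[OF r(3)] wle_refl
    unfolding wequiv_def r_def by auto
qed

lemma wequiv_Diamond_1: "NF B \<Longrightarrow> wequiv (Diamond 1 B) (B @ [1])"
  using ex_NF_wequiv_snoc_1 Diamond_eqI by metis

section \<open>Slices\<close>

fun equiv_prefix :: "word list \<Rightarrow> word list \<Rightarrow> bool" where
  "equiv_prefix [] ps = True"
| "equiv_prefix (q # qs) [] = False"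
| "equiv_prefix (q # qs) (p # ps) \<longleftrightarrow> wequiv q p \<and> equiv_prefix qs ps"

lemma equiv_prefix_take: "equiv_prefix (take m ps) ps"
proof (induction ps arbitrary: m)
  case (Cons p ps)
  then show ?case
    by (cases m) (simp_all add: wequiv_def wle_refl)
qed simp

lemma equiv_prefix_NF:
  "equiv_prefix qs ps \<Longrightarrow> \<forall>x\<in>set qs \<union> set ps. NF x \<Longrightarrow> qs = take (length qs) ps"
proof (induction qs ps rule: equiv_prefix.induct)
  case (3 q qs p ps)
  then have "NF q" "NF p" "q \<precsim> p" "p \<precsim> q"
    by (auto simp: wequiv_def)
  then have "q = p"
    by (rule NF_unique)
  with 3 show ?case
    by simp
qed simp_all

lemma lexle_iff_equiv_prefix:
  "\<forall>x\<in>set qs. \<forall>y\<in>set ps. y \<precsim> x \<Longrightarrow> lexle (\<precsim>) qs ps \<longleftrightarrow> equiv_prefix qs ps"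
  by (induction qs ps rule: equiv_prefix.induct) (auto simp: wequiv_def)

lemma last_wle: "sorted_wrt (\<lambda>x y. y \<precsim> x) xs \<Longrightarrow> x \<in> set xs \<Longrightarrow> last xs \<precsim> x"
proof (induction xs)
  case (Cons a xs)
  show ?case
  proof (cases "xs = []")
    case True
    then show ?thesis
      using Cons.prems(2) wle_refl by simp
  next
    case False
    then have "last (a # xs) = last xs" "last xs \<in> set xs"
      by simp_all
    moreover have "x = a \<or> x \<in> set xs"
      using Cons.prems(2) by simp
    ultimately show ?thesis
      using Cons.IH Cons.prems(1) by auto
  qed
qed simp

lemma equiv_prefix_block_iff:
  assumes p: "sorted_wrt (\<lambda>x y. y \<precsim> x) ps" and q: "qs \<noteq> []" "\<forall>x\<in>set qs. wequiv x l"
    and b: "\<forall>c\<in>set ps. b \<precsim> c \<longleftrightarrow> l \<prec> c"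
  shows "equiv_prefix qs ps \<longleftrightarrow> lexle (\<precsim>) qs ps \<and> \<not> lexle (\<precsim>) [b] ps"
proof (cases ps)
  case Nil
  then show ?thesis
    using q(1) by (cases qs) auto
next
  case (Cons a ps')
  have b_a: "b \<precsim> a \<longleftrightarrow> l \<prec> a"
    using b Cons by simp
  obtain x qs' where qs: "qs = x # qs'"
    using q(1) by (cases qs) auto
  show ?thesis
  proof (cases "a \<precsim> l")
    case True
    have "y \<precsim> x'" if "x' \<in> set qs" "y \<in> set ps" for x' y
    proof -
      have "y \<precsim> a"
        using p that(2) Cons wle_refl by auto
      moreover have "l \<precsim> x'"
        using q(2) that(1) unfolding wequiv_def by blast
      ultimately show ?thesis
        using True wle_trans by blast
    qed
    then have "lexle (\<precsim>) qs ps \<longleftrightarrow> equiv_prefix qs ps"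
      by (intro lexle_iff_equiv_prefix) blast
    moreover have "\<not> b \<precsim> a"
      using b_a True unfolding wless_def by simp
    ultimately show ?thesis
      using Cons by simp
  next
    case False
    have "x \<precsim> l"
      using q(2) qs unfolding wequiv_def by simp
    then have "\<not> wequiv x a"
      using False wle_trans unfolding wequiv_def by blast
    then have "\<not> equiv_prefix qs ps"
      using qs Cons by simp
    moreover have "b \<precsim> a"
      using b_a False wle_total unfolding wless_def by blast
    ultimately show ?thesis
      using Cons by simp
  qed
qed

text \<open>The hypothesis on b says that b is the immediate successor of the last entry of qs,
  cf. wle_snoc_iff.\<close>
lemma equiv_prefix_iff_lexle:
  assumes "sorted_wrt (\<lambda>x y. y \<precsim> x) ps" "sorted_wrt (\<lambda>x y. y \<precsim> x) qs" "qs \<noteq> []"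
    and b: "\<forall>c\<in>set ps \<union> set qs. b \<precsim> c \<longleftrightarrow> last qs \<prec> c"
  shows "equiv_prefix qs ps \<longleftrightarrow>
    lexle (\<precsim>) qs ps \<and> \<not> lexle (\<precsim>) (max_subseq (\<precsim>) (butlast qs @ [b])) ps"
  using assms
proof (induction qs arbitrary: ps)
  case (Cons x qs)
  define l where "l = last (x # qs)"
  have l_min: "l \<precsim> y" if "y \<in> set (x # qs)" for y
    using last_wle[OF Cons.prems(2) that] unfolding l_def .
  show ?case
  proof (cases "\<forall>y\<in>set (x # qs). wequiv y l")
    case True
    have "\<forall>y\<in>set (butlast (x # qs)). \<not> b \<precsim> y"
      using True Cons.prems(4) unfolding wequiv_def wless_def l_def
      by (metis Un_iff in_set_butlastD)
    then have "max_subseq (\<precsim>) (butlast (x # qs) @ [b]) = [b]"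
      by (rule max_subseq_snoc_above)
    then show ?thesis
      using equiv_prefix_block_iff[OF Cons.prems(1) _ True] Cons.prems(4) unfolding l_def by auto
  next
    case False
    then have "l \<prec> x"
      using l_min Cons.prems(2) wle_trans unfolding wequiv_def wless_def by fastforce
    then have qs: "qs \<noteq> []" and l: "l = last qs"
      unfolding l_def by (auto simp: wless_def)
    have "b \<precsim> x \<longleftrightarrow> l \<prec> x"
      using Cons.prems(4) unfolding l_def by simp
    with \<open>l \<prec> x\<close> have "b \<precsim> x"
      by simp
    then have "\<forall>y\<in>set (butlast qs @ [b]). y \<precsim> x"
      using Cons.prems(2) by (auto dest: in_set_butlastD)
    then have M: "max_subseq (\<precsim>) (butlast (x # qs) @ [b]) = x # max_subseq (\<precsim>) (butlast qs @ [b])"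
      using qs by simp
    show ?thesis
    proof (cases ps)
      case (Cons a ps')
      have "equiv_prefix qs ps' \<longleftrightarrow>
          lexle (\<precsim>) qs ps' \<and> \<not> lexle (\<precsim>) (max_subseq (\<precsim>) (butlast qs @ [b])) ps'"
        using Cons.IH[of ps'] \<open>ps = a # ps'\<close> Cons.prems(1,2,4) qs l by auto
      then show ?thesis
        using M \<open>ps = a # ps'\<close> by (auto simp: wequiv_def)
    qed (simp add: M)
  qed
qed simp

lemma equiv_prefix_splitw_iff:
  assumes A: "NF A" and B: "NF B"
  shows "equiv_prefix (splitw 0 B) (splitw 0 A) \<longleftrightarrow> B \<precsim> A \<and> \<not> B @ [1] \<precsim> A"
proof -
  define p where "p = splitw 0 A"
  define q where "q = splitw 0 B"
  have sorted: "sorted_wrt (\<lambda>x y. y \<precsim> x) p" "sorted_wrt (\<lambda>x y. y \<precsim> x) q"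
    and NF: "\<forall>a\<in>set p \<union> set q. NF a \<and> (\<forall>z\<in>set a. 1 \<le> z)"
    unfolding p_def q_def using NF_splitw[OF A] NF_splitw[OF B] splitw_piece_in_S[of _ 0]
    by (auto simp: S_def)
  have q: "q \<noteq> []" "last q \<in> set q"
    unfolding q_def by simp_all
  have "B \<precsim> A \<longleftrightarrow> lexle (\<precsim>) q p"
    unfolding p_def q_def using NF_wle_iff[OF B A] by simp
  moreover have "B @ [1] \<precsim> A \<longleftrightarrow> lexle (\<precsim>) (max_subseq (\<precsim>) (butlast q @ [last q @ [1]])) p"
    using wle_unfold[of "B @ [1]" A 0] max_subseq_sorted[OF sorted(1)] splitw_snoc[of 1 0 B]
    unfolding p_def q_def by simp
  moreover have "\<forall>c\<in>set p \<union> set q. last q @ [1] \<precsim> c \<longleftrightarrow> last q \<prec> c"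
    using NF q(2) by (intro ballI wle_snoc_iff) auto
  ultimately show ?thesis
    using equiv_prefix_iff_lexle[OF sorted q(1)] unfolding p_def q_def by simp
qed

lemma Sl_iff_equiv_prefix:
  assumes "A \<in> W3N" "B \<in> W3N"
  shows "Sl A B \<longleftrightarrow> A \<noteq> [] \<and> B \<noteq> [] \<and> equiv_prefix (splitw 0 B) (splitw 0 A)"
proof
  assume "Sl A B"
  then obtain m Cs where Cs: "A \<noteq> []" "B \<noteq> []" "1 \<le> m" "\<forall>C\<in>set Cs. C \<in> S 1"
    "A = joinw 0 Cs" "B = joinw 0 (take m Cs)"
    unfolding Sl_def by blast
  then have "Cs \<noteq> []" "\<forall>C\<in>set Cs. 0 \<notin> set C"
    unfolding S_def by auto
  moreover from calculation have "take m Cs \<noteq> []" "\<forall>C\<in>set (take m Cs). 0 \<notin> set C"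
    using Cs(3) by (auto dest: in_set_takeD)
  ultimately have "splitw 0 A = Cs" "splitw 0 B = take m Cs"
    using Cs(5,6) splitw_joinw by simp_all
  then show "A \<noteq> [] \<and> B \<noteq> [] \<and> equiv_prefix (splitw 0 B) (splitw 0 A)"
    using Cs(1,2) equiv_prefix_take by simp
next
  assume H: "A \<noteq> [] \<and> B \<noteq> [] \<and> equiv_prefix (splitw 0 B) (splitw 0 A)"
  define m where "m = length (splitw 0 B)"
  have NF: "NF A" "NF B"
    using assms unfolding W3N_def by auto
  then have "\<forall>x\<in>set (splitw 0 B) \<union> set (splitw 0 A). NF x"
    using NF_splitw[of A 0] NF_splitw[of B 0] by auto
  then have prefix: "splitw 0 B = take m (splitw 0 A)"
    unfolding m_def using H equiv_prefix_NF by blast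
  moreover have "1 \<le> m"
    unfolding m_def by (simp add: length_splitw)
  moreover have "m \<le> length (splitw 0 A)"
    using arg_cong[where f = length, OF prefix] unfolding m_def by simp
  moreover have "\<forall>C\<in>set (splitw 0 A). C \<in> S 1"
    using splitw_piece_in_S[of A 0] by simp
  ultimately show "Sl A B"
    unfolding Sl_def using assms H by (metis joinw_splitw length_take min.absorb2)
qed

theorem Sl_iff:
  assumes "A \<in> W3N" "B \<in> W3N"
  shows "Sl A B \<longleftrightarrow> B \<noteq> [] \<and> B \<precsim> A \<and> \<not> B @ [1] \<precsim> A"
proof -
  have "NF A" "NF B"
    using assms unfolding W3N_def by auto
  then show ?thesis
    unfolding Sl_iff_equiv_prefix[OF assms] equiv_prefix_splitw_iff[OF \<open>NF A\<close> \<open>NF B\<close>]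
    using not_wle_Nil by blast
qed

lemma Nil_in_W3N: "[] \<in> W3N"
  by (simp add: W3N_def W3_def NF_empty)

lemma ex_wless_iff: "B \<in> W3N \<Longrightarrow> (\<exists>a\<in>W3N. a \<prec> B) \<longleftrightarrow> B \<noteq> []"
  using Nil_in_W3N Nil_wle not_wle_Nil unfolding W3N_def wless_def by blast

lemma not_wless_iff: "\<not> A \<prec> B \<longleftrightarrow> B \<precsim> A"
  using wle_total unfolding wless_def by blast

lemma wless_Diamond_1_iff: "NF B \<Longrightarrow> A \<prec> Diamond 1 B \<longleftrightarrow> \<not> B @ [1] \<precsim> A"
  using wequiv_Diamond_1 wle_trans wle_total unfolding wequiv_def wless_def by blast

theorem lemma6:
  shows "\<exists>\<phi>. \<forall>e. (\<forall>i. e i \<in> W3N) \<longrightarrow> (Sl (e 0) (e 1) \<longleftrightarrow> fsat e \<phi>)"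
proof (intro exI allI impI)
  fix e :: "nat \<Rightarrow> word"
  assume e: "\<forall>i. e i \<in> W3N"
  then have "NF (e 1)"
    unfolding W3N_def by blast
  then show "Sl (e 0) (e 1) \<longleftrightarrow>
    fsat e (FAnd (FEx 2 (FLess (FVar 2) (FVar 1)))
      (FAnd (FNot (FLess (FVar 0) (FVar 1))) (FLess (FVar 0) (FD1 (FVar 1)))))"
    using Sl_iff ex_wless_iff not_wless_iff wless_Diamond_1_iff e by simp
qed

end
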